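(* Let $(X,d)$ be a geometrically doubling metric space with constants $N,n$ (as in the context), let $\mu$ be a Borel measure on $X$ which is finite on bounded sets, and let $\beta>5^n$. Then for every $f\in L^1_{\mathrm{loc}}(X,\mu)$ and $\mu$-a.e. $x\in X$, $$f(x)=\lim_{\substack{B\downarrow x\\ (5,\beta)\text{-doubling}}}\frac{1}{\mu(B)}\int_B f\,d\mu,$$ where the limit is taken along the family of all $(5,\beta)$-doubling balls $B$ containing $x$ as they shrink to $x$: for $\mu$-a.e. $x$ there exist $(5,\beta)$-doubling balls containing $x$ of arbitrarily small radius, and for every $\varepsilon>0$ there is $\eta>0$ such that $\big|\frac{1}{\mu(B)}\int_B f\,d\mu-f(x)\big|<\varepsilon$ for every $(5,\beta)$-doubling ball $B\ni x$ of radius less than $\eta$.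
   Context: Balls are open, $B=B(x,r)$, and $tB:=B(x,tr)$. $(X,d)$ is geometrically doubling with constants $N,n$ if for every $\delta\in(0,1)$, every ball $B(x,r)$ contains at most $N\delta^{-n}$ points $y_j$ that are centres of pairwise disjoint balls $B(y_j,\delta r)$. A ball $B$ is $(5,\beta)$-doubling if $\mu(5B)\le\beta\mu(B)$. $L^1_{\mathrm{loc}}(X,\mu)$ consists of functions integrable over every bounded subset of $X$. *)

theory Defs
  imports "HOL-Analysis.Analysis"
begin

definition geom_doubling :: "real \<Rightarrow> real \<Rightarrow> 'a::metric_space itself \<Rightarrow> bool" where
  "geom_doubling N n _ \<longleftrightarrow>
     (\<forall>\<delta>::real. 0 < \<delta> \<and> \<delta> < 1 \<longrightarrow>
       (\<forall>(x::'a) (r::real) (Y::'a set).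
          Y \<subseteq> ball x r \<and>
          (\<forall>y\<in>Y. \<forall>z\<in>Y. y \<noteq> z \<longrightarrow> ball y (\<delta> * r) \<inter> ball z (\<delta> * r) = {})
          \<longrightarrow> finite Y \<and> real (card Y) \<le> N * \<delta> powr (- n)))"

definition doubling_ball :: "'a::metric_space measure \<Rightarrow> real \<Rightarrow> 'a \<Rightarrow> real \<Rightarrow> bool" where
  "doubling_ball \<mu> \<beta> c r \<longleftrightarrow> emeasure \<mu> (ball c (5 * r)) \<le> ennreal \<beta> * emeasure \<mu> (ball c r)"

definition loc_integrable :: "'a::metric_space measure \<Rightarrow> ('a \<Rightarrow> real) \<Rightarrow> bool" where
  "loc_integrable \<mu> f \<longleftrightarrow> f \<in> borel_measurable \<mu> \<and>
     (\<forall>S. S \<in> sets \<mu> \<and> bounded S \<longrightarrow> set_integrable \<mu> S f)"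

end

theory Submission
  imports Defs
begin

text \<open>
  If \<open>x\<close> lies in no small \<open>(5,\<beta>)\<close>-doubling ball centred at \<open>x\<close>, the measure of \<open>B(x, 5\<^sup>-\<^sup>k)\<close>
  decays like \<open>\<beta>\<^sup>-\<^sup>k\<close>, while geometric doubling covers a bounded set of such points by
  \<open>O(5\<^sup>n\<^sup>k)\<close> balls of radius \<open>5\<^sup>-\<^sup>k\<close>; as \<open>\<beta> > 5\<^sup>n\<close>, these points form a null set.

  For the averages, let \<open>f < a\<close> on a set \<open>K\<close> and consider the points of \<open>K\<close> near which the
  averages over arbitrarily small doubling balls exceed \<open>b > a\<close>. For any open \<open>G \<supseteq> K\<close>, a
  Vitali-type selection of disjoint such balls inside \<open>G\<close>, together with the doubling of
  each selected ball, bounds the measure of these points by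
  \<open>\<beta> (|a| \<mu>(G - K) + \<integral>\<^bsub>G-K\<^esub> |f|) / (b - a)\<close>. Outer regularity makes the bound
  arbitrarily small, so the points form a null set. Taking all rational \<open>a < b\<close> and applying
  the result to \<open>f\<close> and \<open>-f\<close> gives convergence of the averages almost everywhere.
\<close>

section \<open>Outer regularity of finite Borel measures on metric spaces\<close>

definition closed_open_regular :: "'a::topological_space measure \<Rightarrow> 'a set \<Rightarrow> bool" where
  "closed_open_regular M B \<longleftrightarrow>
    (\<forall>e>0. \<exists>F U. closed F \<and> open U \<and> F \<subseteq> B \<and> B \<subseteq> U \<and> measure M (U - F) < e)"

lemma closed_open_regularD:
  assumes "closed_open_regular M B" "0 < e"
  obtains F U where "closed F" "open U" "F \<subseteq> B" "B \<subseteq> U" "measure M (U - F) < e"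
proof -
  have "\<exists>F U. closed F \<and> open U \<and> F \<subseteq> B \<and> B \<subseteq> U \<and> measure M (U - F) < e"
    using assms unfolding closed_open_regular_def by simp
  then show ?thesis using that by blast
qed

lemma closed_open_regular_Compl:
  assumes "closed_open_regular M A"
  shows "closed_open_regular M (- A)"
  unfolding closed_open_regular_def
proof (intro allI impI)
  fix e :: real assume "0 < e"
  then obtain F U where "closed F" "open U" "F \<subseteq> A" "A \<subseteq> U" "measure M (U - F) < e"
    by (rule closed_open_regularD[OF assms])
  moreover have "- F - - U = U - F" by blast
  ultimately show "\<exists>F' U'. closed F' \<and> open U' \<and> F' \<subseteq> - A \<and> - A \<subseteq> U' \<and> measure M (U' - F') < e"
    by (intro exI[of _ "- U"] exI[of _ "- F"]) auto
qed

lemma closed_open_regular_closed: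
  fixes M :: "'a::metric_space measure"
  assumes "finite_measure M" and sets: "sets M = sets borel" and "closed A"
  shows "closed_open_regular M A"
  unfolding closed_open_regular_def
proof (intro allI impI)
  interpret finite_measure M by fact
  fix e :: real assume "0 < e"
  define U where "U k = (\<Union>a\<in>A. ball a (1 / Suc k))" for k :: nat
  have "U (Suc k) \<subseteq> U k" for k
    unfolding U_def by (intro UN_mono subset_ball order_refl) (simp add: frac_le)
  then have dec: "decseq (\<lambda>k. U k - A)" by (intro decseq_SucI) blast
  have empty: "(\<Inter>k. U k - A) = {}"
  proof -
    have "x \<in> closure A" if x: "\<forall>k. x \<in> U k" for x
      unfolding closure_approachable
    proof (intro allI impI)
      fix \<epsilon> :: real assume "0 < \<epsilon>"
      then obtain k where "1 / Suc k < \<epsilon>" using nat_approx_posE by blast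
      moreover obtain y where "y \<in> A" "dist y x < 1 / Suc k"
        using x by (auto simp: U_def)
      ultimately show "\<exists>y\<in>A. dist y x < \<epsilon>" by force
    qed
    then show ?thesis using \<open>closed A\<close> by auto
  qed
  have U_open: "open (U k)" for k
    by (auto simp: U_def)
  then have "range (\<lambda>k. U k - A) \<subseteq> sets M"
    using sets \<open>closed A\<close> by auto
  from finite_Lim_measure_decseq[OF this dec, unfolded empty]
  have lim: "(\<lambda>k. measure M (U k - A)) \<longlonglongrightarrow> 0" by simp
  from order_tendstoD(2)[OF lim \<open>0 < e\<close>] obtain k where "measure M (U k - A) < e"
    by (auto simp: eventually_sequentially)
  moreover have "A \<subseteq> U k"
    using \<open>0 < e\<close> by (force simp: U_def)
  ultimately show "\<exists>F U. closed F \<and> open U \<and> F \<subseteq> A \<and> A \<subseteq> U \<and> measure M (U - F) < e"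
    using U_open \<open>closed A\<close> by blast
qed

lemma finite_measure_UN_lessThan_approx:
  fixes F :: "nat \<Rightarrow> 'a set"
  assumes "finite_measure M" "range F \<subseteq> sets M" "0 < e"
  obtains n where "measure M ((\<Union>i. F i) - (\<Union>i<n. F i)) < e"
proof -
  interpret finite_measure M by fact
  have lim: "(\<lambda>n. measure M ((\<Union>i. F i) - (\<Union>i<n. F i))) \<longlonglongrightarrow> measure M (\<Inter>n. (\<Union>i. F i) - (\<Union>i<n. F i))"
    by (rule finite_Lim_measure_decseq) (use assms(2) in \<open>auto simp: decseq_def\<close>)
  have "(\<Inter>n. (\<Union>i. F i) - (\<Union>i<n. F i)) = {}" by blast
  from order_tendstoD(2)[OF lim[unfolded this], of e] \<open>0 < e\<close> show ?thesis
    using that by (auto simp: eventually_sequentially)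
qed

lemma finite_measure_UN_le_sums:
  assumes "finite_measure M" "range A \<subseteq> sets M" "\<And>i. measure M (A i) \<le> d i" "d sums s"
  shows "measure M (\<Union>i. A i) \<le> s"
proof -
  interpret finite_measure M by fact
  have "summable (\<lambda>i. measure M (A i))"
    by (rule summable_comparison_test'[of d 0]) (use assms(3,4) in \<open>auto simp: sums_iff\<close>)
  then have "measure M (\<Union>i. A i) \<le> (\<Sum>i. measure M (A i))"
    using assms(2) by (intro finite_measure_subadditive_countably)
  also have "\<dots> \<le> (\<Sum>i. d i)"
    using assms(4) by (intro suminf_le[OF assms(3) \<open>summable _\<close>]) (simp add: sums_iff)
  also have "\<dots> = s"
    using assms(4) by (simp add: sums_iff)
  finally show ?thesis .
qed

lemma closed_open_regular_UN:
  fixes M :: "'a::metric_space measure" and D :: "nat \<Rightarrow> 'a set"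
  assumes "finite_measure M" and sets: "sets M = sets borel"
    and regular: "\<And>i. closed_open_regular M (D i)"
  shows "closed_open_regular M (\<Union>i. D i)"
  unfolding closed_open_regular_def
proof (intro allI impI)
  interpret finite_measure M by fact
  fix e :: real assume "0 < e"
  define d where "d i = e / 2 * (1 / 2) ^ Suc i" for i :: nat
  have d: "d sums (e / 2)"
    unfolding d_def using sums_mult[OF power_half_series, of "e / 2"] by simp
  obtain F U where FU: "\<And>i. closed (F i)" "\<And>i. open (U i)" "\<And>i. F i \<subseteq> D i" "\<And>i. D i \<subseteq> U i"
    "\<And>i. measure M (U i - F i) < d i"
  proof -
    have "\<exists>F U. closed F \<and> open U \<and> F \<subseteq> D i \<and> D i \<subseteq> U \<and> measure M (U - F) < d i" for i
    proof -
      have "0 < d i" using \<open>0 < e\<close> by (simp add: d_def)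
      then obtain F U where "closed F" "open U" "F \<subseteq> D i" "D i \<subseteq> U" "measure M (U - F) < d i"
        by (rule closed_open_regularD[OF regular])
      then show ?thesis by blast
    qed
    then show ?thesis using that by metis
  qed
  have sets_FU: "F i \<in> sets M" "U i \<in> sets M" for i
    using FU sets by auto
  obtain n where n: "measure M ((\<Union>i. F i) - (\<Union>i<n. F i)) < e / 2"
    by (rule finite_measure_UN_lessThan_approx[where F = F and e = "e / 2"])
      (use \<open>finite_measure M\<close> sets_FU \<open>0 < e\<close> in auto)
  have "(\<Union>i. U i) - (\<Union>i<n. F i) \<subseteq> (\<Union>i. U i - F i) \<union> ((\<Union>i. F i) - (\<Union>i<n. F i))"
    by blast
  then have "measure M ((\<Union>i. U i) - (\<Union>i<n. F i)) \<le> measure M ((\<Union>i. U i - F i) \<union> ((\<Union>i. F i) - (\<Union>i<n. F i)))"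
    using sets_FU by (intro finite_measure_mono) auto
  also have "\<dots> \<le> measure M (\<Union>i. U i - F i) + measure M ((\<Union>i. F i) - (\<Union>i<n. F i))"
    using sets_FU by (intro measure_Un_le) auto
  also have "measure M (\<Union>i. U i - F i) \<le> e / 2"
    using sets_FU
    by (intro finite_measure_UN_le_sums[OF \<open>finite_measure M\<close> _ less_imp_le[OF FU(5)] d]) auto
  finally have "measure M ((\<Union>i. U i) - (\<Union>i<n. F i)) < e"
    using n by simp
  moreover have "closed (\<Union>i<n. F i)" "open (\<Union>i. U i)"
    using FU by auto
  moreover have "(\<Union>i<n. F i) \<subseteq> (\<Union>i. D i)" "(\<Union>i. D i) \<subseteq> (\<Union>i. U i)"
    using FU(3,4) by blast+
  ultimately show "\<exists>F U. closed F \<and> open U \<and> F \<subseteq> (\<Union>i. D i) \<and> (\<Union>i. D i) \<subseteq> U \<and>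
      measure M (U - F) < e"
    by blast
qed

lemma finite_measure_outer_regular:
  fixes M :: "'a::metric_space measure"
  assumes sets: "sets M = sets borel" and "emeasure M (space M) \<noteq> \<infinity>"
    and "B \<in> sets borel" and "0 < e"
  shows "\<exists>U. open U \<and> B \<subseteq> U \<and> measure M (U - B) < e"
proof -
  interpret finite_measure M by rule fact
  have "closed_open_regular M B" if "B \<in> sigma_sets UNIV (Collect closed)" for B
    using that
  proof induction
    case (Basic A)
    then show ?case
      using closed_open_regular_closed[OF finite_measure_axioms sets] by simp
  next
    case Empty
    show ?case
      using closed_open_regular_closed[OF finite_measure_axioms sets] by simp
  next
    case (Compl A)
    then show ?case
      using closed_open_regular_Compl by (simp add: Compl_eq_Diff_UNIV[symmetric])
  next
    case (Union D)
    show ?case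
      by (rule closed_open_regular_UN[OF finite_measure_axioms sets Union.IH])
  qed
  then have "closed_open_regular M B"
    using assms(3) by (simp add: borel_eq_closed)
  then obtain F U where "closed F" "open U" "F \<subseteq> B" "B \<subseteq> U" "measure M (U - F) < e"
    using \<open>0 < e\<close> by (rule closed_open_regularD)
  moreover have "measure M (U - B) \<le> measure M (U - F)"
    using \<open>F \<subseteq> B\<close> \<open>closed F\<close> \<open>open U\<close> sets by (intro finite_measure_mono) auto
  ultimately show ?thesis by force
qed

section \<open>Geometrically doubling spaces and a Vitali covering lemma\<close>

lemma powr_divide_divide_power:
  fixes a r c n :: real
  assumes "0 < a" "0 < r" "0 < c"
  shows "(a / (r / c ^ k)) powr n = (a / r) powr n * (c powr n) ^ k"
proof -
  have "(c ^ k) powr n = (c powr n) ^ k"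
    using assms(3) by (simp add: powr_realpow[symmetric] powr_powr powr_power mult.commute)
  moreover have "a / (r / c ^ k) = a / r * c ^ k" by simp
  ultimately show ?thesis
    using assms by (simp only: powr_mult)
qed

lemma finite_max_card:
  fixes b :: real
  assumes "P {}" and bound: "\<And>Y. P Y \<Longrightarrow> finite Y \<and> real (card Y) \<le> b"
  obtains Y where "P Y" "\<And>Z. P Z \<Longrightarrow> card Z \<le> card Y"
proof -
  have "card ` Collect P \<subseteq> {..nat \<lceil>b\<rceil>}"
  proof
    fix m assume "m \<in> card ` Collect P"
    then obtain Y where "P Y" "m = card Y" by blast
    then have "real m \<le> real (nat \<lceil>b\<rceil>)"
      using bound[of Y] real_nat_ceiling_ge[of b] by linarith
    then show "m \<in> {..nat \<lceil>b\<rceil>}" by simp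
  qed
  then have fin: "finite (card ` Collect P)"
    by (rule finite_subset) simp
  have "Max (card ` Collect P) \<in> card ` Collect P"
    using fin \<open>P {}\<close> by (intro Max_in) auto
  then obtain Y where "P Y" "card Y = Max (card ` Collect P)" by auto
  then show ?thesis
    using Max_ge[OF fin] by (intro that) auto
qed

lemma geom_doubling_exponent_nonneg:
  assumes gd: "geom_doubling N n TYPE('a::metric_space)"
  shows "0 \<le> n"
proof (rule ccontr)
  assume "\<not> 0 \<le> n"
  then have n: "n < 0" by simp
  obtain x :: 'a where True by simp
  define c where "c = 1 / (2 * \<bar>N\<bar> + 2)"
  have c: "0 < c" "c < 1" by (auto simp: c_def field_simps)
  define \<delta> where "\<delta> = c powr (1 / - n)"
  have \<delta>: "0 < \<delta>" "\<delta> < 1"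
    using c n powr_less_mono2[of "1 / - n" c 1] by (auto simp: \<delta>_def)
  have "\<delta> powr (- n) = c"
    using c n by (simp add: \<delta>_def powr_powr)
  moreover have "real (card {x}) \<le> N * \<delta> powr (- n)"
    using gd[unfolded geom_doubling_def, rule_format, of \<delta> "{x}" x 1] \<delta> by auto
  ultimately have "1 \<le> N * c" by simp
  then show False by (simp add: c_def field_simps split: abs_split)
qed

text \<open>The doubling condition is applied to the ball \<open>B(x\<^sub>0, R + \<rho>)\<close> with \<open>\<delta> = \<rho> / (2(R + \<rho>))\<close>,
  so that the balls of radius \<open>\<rho>/2\<close> around \<open>\<rho>\<close>-separated points are disjoint.\<close>
lemma geom_doubling_separated_card:
  assumes gd: "geom_doubling N n TYPE('a::metric_space)" and \<rho>: "0 < \<rho>" "\<rho> \<le> 1" and "0 < R"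
    and Y: "Y \<subseteq> ball (x0::'a) R" and sep: "\<forall>y\<in>Y. \<forall>z\<in>Y. y \<noteq> z \<longrightarrow> \<rho> \<le> dist y z"
  shows "finite Y \<and> real (card Y) \<le> \<bar>N\<bar> * (2 * (R + 1) / \<rho>) powr n"
proof -
  define \<delta> where "\<delta> = \<rho> / (2 * (R + \<rho>))"
  have \<delta>: "0 < \<delta>" "\<delta> < 1" "\<delta> * (R + \<rho>) = \<rho> / 2"
    using \<rho> \<open>0 < R\<close> by (auto simp: \<delta>_def field_simps)
  have "ball y (\<delta> * (R + \<rho>)) \<inter> ball z (\<delta> * (R + \<rho>)) = {}" if "y \<in> Y" "z \<in> Y" "y \<noteq> z" for y z
  proof -
    have "dist y z < \<rho>" if "dist y w < \<rho> / 2" "dist z w < \<rho> / 2" for w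
      using that dist_triangle[of y z w] by (simp add: dist_commute)
    moreover have "\<rho> \<le> dist y z" using sep that by blast
    ultimately show ?thesis unfolding \<delta>(3) by fastforce
  qed
  moreover have "Y \<subseteq> ball x0 (R + \<rho>)" using Y \<rho> by auto
  ultimately have "finite Y \<and> real (card Y) \<le> N * \<delta> powr (- n)"
    using gd[unfolded geom_doubling_def, rule_format, of \<delta> Y x0 "R + \<rho>"] \<delta> by blast
  moreover have "N * \<delta> powr (- n) \<le> \<bar>N\<bar> * (2 * (R + 1) / \<rho>) powr n"
  proof -
    have "\<delta> powr (- n) = (2 * (R + \<rho>) / \<rho>) powr n"
      using \<rho> \<open>0 < R\<close> by (simp add: \<delta>_def powr_minus_divide powr_divide)
    also have "\<dots> \<le> (2 * (R + 1) / \<rho>) powr n"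
      using \<rho> \<open>0 < R\<close> geom_doubling_exponent_nonneg[OF gd]
      by (intro powr_mono2) (auto simp: divide_simps)
    finally show ?thesis
      by (intro order_trans[OF mult_right_mono[of N "\<bar>N\<bar>"]] mult_left_mono) auto
  qed
  ultimately show ?thesis by linarith
qed

lemma geom_doubling_net:
  assumes gd: "geom_doubling N n TYPE('a::metric_space)" and \<rho>: "0 < \<rho>" "\<rho> \<le> 1" and "0 < R"
    and E: "E \<subseteq> ball (x0::'a) R"
  obtains Y where "finite Y" "Y \<subseteq> E" "real (card Y) \<le> \<bar>N\<bar> * (2 * (R + 1) / \<rho>) powr n"
    "E \<subseteq> (\<Union>y\<in>Y. ball y \<rho>)"
proof -
  define sep where "sep Y \<longleftrightarrow> Y \<subseteq> E \<and> (\<forall>y\<in>Y. \<forall>z\<in>Y. y \<noteq> z \<longrightarrow> \<rho> \<le> dist y z)" for Y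
  have bound: "finite Y \<and> real (card Y) \<le> \<bar>N\<bar> * (2 * (R + 1) / \<rho>) powr n" if "sep Y" for Y
    using geom_doubling_separated_card[OF gd \<rho> \<open>0 < R\<close>, of Y x0] that E by (auto simp: sep_def)
  have "sep {}" by (simp add: sep_def)
  then obtain Y where Y: "sep Y" and max: "\<And>Z. sep Z \<Longrightarrow> card Z \<le> card Y"
    using finite_max_card[of sep, OF _ bound] by blast
  have "z \<in> (\<Union>y\<in>Y. ball y \<rho>)" if "z \<in> E" for z
  proof (rule ccontr)
    assume far: "z \<notin> (\<Union>y\<in>Y. ball y \<rho>)"
    then have "sep (insert z Y)"
      using Y \<open>z \<in> E\<close> by (auto simp: sep_def not_less dist_commute)
    moreover have "z \<notin> Y" using far \<rho> by auto
    ultimately show False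
      using max[of "insert z Y"] bound[OF Y] by simp
  qed
  then have "E \<subseteq> (\<Union>y\<in>Y. ball y \<rho>)" by blast
  with Y bound[OF Y] show ?thesis by (intro that) (auto simp: sep_def)
qed

lemma disjoint_balls_card:
  assumes gd: "geom_doubling N n TYPE('a::metric_space)" and \<rho>: "0 < \<rho>" "\<rho> \<le> 1" and "0 < R"
    and disj: "disjoint_family_on (\<lambda>p. ball (fst p) (snd p)) S"
    and S: "\<And>p. p \<in> S \<Longrightarrow> \<rho> < snd p \<and> fst p \<in> ball (x0::'a) R"
  shows "finite S \<and> real (card S) \<le> \<bar>N\<bar> * (2 * (R + 1) / \<rho>) powr n"
proof -
  have sep: "\<rho> \<le> dist (fst p) (fst q)" if "p \<in> S" "q \<in> S" "p \<noteq> q" for p q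
  proof (rule ccontr)
    assume "\<not> \<rho> \<le> dist (fst p) (fst q)"
    then have "fst p \<in> ball (fst p) (snd p) \<inter> ball (fst q) (snd q)"
      using S[OF that(1)] S[OF that(2)] \<rho> by (auto simp: dist_commute)
    with disj that show False by (auto simp: disjoint_family_on_def)
  qed
  then have "inj_on fst S"
    using \<rho> by (force intro: inj_onI)
  moreover have "finite (fst ` S) \<and> real (card (fst ` S)) \<le> \<bar>N\<bar> * (2 * (R + 1) / \<rho>) powr n"
    using S sep by (intro geom_doubling_separated_card[OF gd \<rho> \<open>0 < R\<close>, of _ x0]) auto
  ultimately show ?thesis by (simp add: card_image finite_image_iff)
qed

definition maximal_disjoint_balls :: "('a::metric_space \<times> real) set \<Rightarrow> ('a \<times> real) set \<Rightarrow> bool" where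
  "maximal_disjoint_balls C S \<longleftrightarrow> S \<subseteq> C \<and> finite S \<and> disjoint_family_on (\<lambda>p. ball (fst p) (snd p)) S \<and>
     (\<forall>p\<in>C. \<exists>q\<in>S. ball (fst p) (snd p) \<inter> ball (fst q) (snd q) \<noteq> {})"

lemma maximal_disjoint_balls_exists:
  assumes gd: "geom_doubling N n TYPE('a::metric_space)" and \<rho>: "0 < \<rho>" "\<rho> \<le> 1" and "0 < R"
    and C: "\<And>p. p \<in> C \<Longrightarrow> \<rho> < snd p \<and> fst p \<in> ball (x0::'a) R"
  shows "\<exists>S. maximal_disjoint_balls C S"
proof -
  define disj where "disj S \<longleftrightarrow> S \<subseteq> C \<and> disjoint_family_on (\<lambda>p. ball (fst p) (snd p)) S" for S
  have bound: "finite S \<and> real (card S) \<le> \<bar>N\<bar> * (2 * (R + 1) / \<rho>) powr n" if "disj S" for S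
    using that C by (intro disjoint_balls_card[OF gd \<rho> \<open>0 < R\<close>, of _ x0]) (auto simp: disj_def)
  have "disj {}" by (simp add: disj_def disjoint_family_on_def)
  then obtain S where S: "disj S" and max: "\<And>S'. disj S' \<Longrightarrow> card S' \<le> card S"
    using finite_max_card[of disj, OF _ bound] by blast
  have "\<exists>q\<in>S. ball (fst p) (snd p) \<inter> ball (fst q) (snd q) \<noteq> {}" if "p \<in> C" for p
  proof (rule ccontr)
    assume miss: "\<not> ?thesis"
    then have "disj (insert p S)"
      using S \<open>p \<in> C\<close> by (auto simp: disj_def disjoint_family_on_def Int_commute)
    moreover have "p \<notin> S"
      using miss C[OF \<open>p \<in> C\<close>] \<rho> by force
    ultimately show False
      using max[of "insert p S"] bound[OF S] by simp
  qed
  then show ?thesis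
    using S bound[OF S] by (auto simp: maximal_disjoint_balls_def disj_def)
qed

lemma ball_subset_ball_dist:
  assumes "dist x (y::'a::metric_space) < R" "r \<le> s"
  shows "ball y r \<subseteq> ball x (R + s)"
proof
  fix z assume "z \<in> ball y r"
  then show "z \<in> ball x (R + s)"
    using assms dist_triangle[of x z y] by simp
qed

lemma ball_subset_enlarged_ball:
  assumes "ball (c::'a::metric_space) r \<inter> ball d s \<noteq> {}" "r \<le> 2 * s"
  shows "ball c r \<subseteq> ball d (5 * s)"
proof
  fix z assume z: "z \<in> ball c r"
  obtain y where y: "dist c y < r" "dist d y < s" using assms(1) by auto
  have "dist d z \<le> dist d y + dist y c + dist c z"
    using dist_triangle[of d z y] dist_triangle[of y z c] by linarith
  also have "\<dots> < s + r + r" using y z by (simp add: dist_commute)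
  finally show "z \<in> ball d (5 * s)" using assms(2) by simp
qed

lemma dyadic_scale_exists:
  assumes "0 < (r::real)" "r \<le> 1"
  obtains k where "1 / 2 ^ Suc k < r" "r \<le> 1 / 2 ^ k"
proof -
  obtain m where m: "(1 / 2) ^ m < r"
    using real_arch_pow_inv[OF assms(1), of "1 / 2"] by auto
  define k where "k = (LEAST k. 1 / 2 ^ Suc k < r)"
  have "1 / (2::real) ^ Suc m \<le> 1 / 2 ^ m" by (simp add: divide_simps)
  then have "1 / (2::real) ^ Suc m < r"
    using m by (simp add: power_one_over)
  then have "1 / 2 ^ Suc k < r"
    unfolding k_def by (rule LeastI)
  moreover have "r \<le> 1 / 2 ^ k"
  proof (cases k)
    case (Suc j)
    then show ?thesis
      using not_less_Least[of j "\<lambda>k. 1 / 2 ^ Suc k < r"] unfolding k_def by simp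
  qed (use assms in simp)
  ultimately show ?thesis by (rule that)
qed

definition vitali_candidates ::
    "('a::metric_space \<times> real) set \<Rightarrow> ('a \<times> real) set \<Rightarrow> nat \<Rightarrow> ('a \<times> real) set" where
  "vitali_candidates F T k = {p\<in>F. 1 / 2 ^ Suc k < snd p \<and> snd p \<le> 1 / 2 ^ k \<and>
      (\<forall>q\<in>T. ball (fst p) (snd p) \<inter> ball (fst q) (snd q) = {})}"

primrec vitali_selection :: "('a::metric_space \<times> real) set \<Rightarrow> nat \<Rightarrow> ('a \<times> real) set" where
  "vitali_selection F 0 = {}"
| "vitali_selection F (Suc k) = vitali_selection F k \<union>
     (SOME S. maximal_disjoint_balls (vitali_candidates F (vitali_selection F k) k) S)"

context
  fixes N n R :: real and x0 :: "'a::metric_space" and F :: "('a \<times> real) set"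
  assumes gd: "geom_doubling N n TYPE('a)" and "0 < R"
    and F: "\<And>p. p \<in> F \<Longrightarrow> 0 < snd p \<and> snd p \<le> 1 \<and> fst p \<in> ball x0 R"
begin

lemma vitali_selection_Suc:
  obtains S where "vitali_selection F (Suc k) = vitali_selection F k \<union> S"
    "maximal_disjoint_balls (vitali_candidates F (vitali_selection F k) k) S"
proof -
  let ?C = "vitali_candidates F (vitali_selection F k) k"
  have \<rho>: "0 < (1::real) / 2 ^ Suc k" "1 / 2 ^ Suc k \<le> (1::real)"
    using power_le_one[of "1 / 2 :: real" "Suc k"] by (simp_all add: power_one_over)
  have "1 / 2 ^ Suc k < snd p \<and> fst p \<in> ball x0 R" if "p \<in> ?C" for p
    using that F by (auto simp: vitali_candidates_def)
  then have "\<exists>S. maximal_disjoint_balls ?C S"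
    by (rule maximal_disjoint_balls_exists[OF gd \<rho> \<open>0 < R\<close>])
  then have "maximal_disjoint_balls ?C (SOME S. maximal_disjoint_balls ?C S)"
    by (rule someI_ex)
  then show ?thesis
    by (intro that) simp_all
qed

lemma vitali_selection_invariants:
  "finite (vitali_selection F k) \<and> vitali_selection F k \<subseteq> F \<and>
   disjoint_family_on (\<lambda>p. ball (fst p) (snd p)) (vitali_selection F k) \<and>
   (\<forall>q\<in>vitali_selection F k. 1 / 2 ^ k < snd q)"
proof (induction k)
  case (Suc k)
  let ?T = "vitali_selection F k"
  obtain S where eq: "vitali_selection F (Suc k) = ?T \<union> S"
    and S: "maximal_disjoint_balls (vitali_candidates F ?T k) S"
    by (rule vitali_selection_Suc)
  have SC: "S \<subseteq> vitali_candidates F ?T k" "finite S" "disjoint_family_on (\<lambda>p. ball (fst p) (snd p)) S"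
    using S by (auto simp: maximal_disjoint_balls_def)
  have cross: "ball (fst p) (snd p) \<inter> ball (fst q) (snd q) = {}" if "p \<in> S" "q \<in> ?T" for p q
    using SC(1) that by (auto simp: vitali_candidates_def)
  have "disjoint_family_on (\<lambda>p. ball (fst p) (snd p)) (?T \<union> S)"
    using Suc.IH SC(3) cross unfolding disjoint_family_on_def by (metis Int_commute Un_iff)
  moreover have "1 / 2 ^ Suc k < snd q" if "q \<in> ?T \<union> S" for q
  proof -
    have "1 / (2::real) ^ Suc k \<le> 1 / 2 ^ k" by (simp add: divide_simps)
    then show ?thesis
      using that Suc.IH SC(1) by (force simp: vitali_candidates_def)
  qed
  moreover have "S \<subseteq> F" using SC(1) by (auto simp: vitali_candidates_def)
  ultimately show ?case
    using Suc.IH SC(2) unfolding eq by blast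
qed (simp add: disjoint_family_on_def)

lemma vitali_selection_covers:
  assumes "p \<in> F"
  shows "\<exists>k. \<exists>q\<in>vitali_selection F k. ball (fst p) (snd p) \<subseteq> ball (fst q) (5 * snd q)"
proof -
  obtain k where k: "1 / 2 ^ Suc k < snd p" "snd p \<le> 1 / 2 ^ k"
    using F[OF assms] by (auto elim: dyadic_scale_exists)
  obtain S where eq: "vitali_selection F (Suc k) = vitali_selection F k \<union> S"
    and S: "maximal_disjoint_balls (vitali_candidates F (vitali_selection F k) k) S"
    by (rule vitali_selection_Suc)
  have "\<exists>q\<in>vitali_selection F k \<union> S. ball (fst p) (snd p) \<inter> ball (fst q) (snd q) \<noteq> {}"
  proof (cases "\<exists>q\<in>vitali_selection F k. ball (fst p) (snd p) \<inter> ball (fst q) (snd q) \<noteq> {}")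
    case False
    then have "p \<in> vitali_candidates F (vitali_selection F k) k"
      using assms k by (auto simp: vitali_candidates_def)
    moreover have "\<forall>p\<in>vitali_candidates F (vitali_selection F k) k.
        \<exists>q\<in>S. ball (fst p) (snd p) \<inter> ball (fst q) (snd q) \<noteq> {}"
      using S by (simp add: maximal_disjoint_balls_def)
    ultimately show ?thesis by blast
  qed blast
  then obtain q where q: "q \<in> vitali_selection F (Suc k)"
    "ball (fst p) (snd p) \<inter> ball (fst q) (snd q) \<noteq> {}" unfolding eq by blast
  have "1 / 2 ^ Suc k < snd q"
    using vitali_selection_invariants[of "Suc k"] q(1) by blast
  then have "snd p \<le> 2 * snd q" using k(2) by simp
  then show ?thesis
    using ball_subset_enlarged_ball[OF q(2)] q(1) by blast
qed

end

lemma vitali_covering_doubling: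
  assumes gd: "geom_doubling N n TYPE('a::metric_space)" and "0 < R"
    and F: "\<And>p. p \<in> F \<Longrightarrow> 0 < snd p \<and> snd p \<le> 1 \<and> fst p \<in> ball (x0::'a) R"
  obtains T where "\<And>k. finite (T k)" "\<And>k. T k \<subseteq> F"
    "\<And>k. disjoint_family_on (\<lambda>p. ball (fst p) (snd p)) (T k)" "incseq T"
    "\<And>p. p \<in> F \<Longrightarrow> \<exists>k. \<exists>q\<in>T k. ball (fst p) (snd p) \<subseteq> ball (fst q) (5 * snd q)"
proof
  show "incseq (vitali_selection F)" by (rule incseq_SucI) auto
qed (use vitali_selection_invariants[OF assms] vitali_selection_covers[OF assms] in auto)

section \<open>Differentiation along doubling balls\<close>

lemma set_integral_abs_mono_set:
  fixes g :: "'a \<Rightarrow> real"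
  assumes "set_integrable M B g" "A \<in> sets M" "A \<subseteq> B"
  shows "(LINT x:A|M. \<bar>g x\<bar>) \<le> (LINT x:B|M. \<bar>g x\<bar>)"
proof -
  have "set_integrable M A (\<lambda>x. \<bar>g x\<bar>)"
    by (rule set_integrable_subset[OF set_integrable_abs[OF assms(1)] assms(2,3)])
  then show ?thesis
    using set_integrable_abs[OF assms(1)] assms(3) unfolding set_lebesgue_integral_def set_integrable_def
    by (intro integral_mono) (auto split: split_indicator)
qed

lemma set_integral_abs_decseq_tendsto_0:
  fixes g :: "'a \<Rightarrow> real"
  assumes g: "set_integrable M S g" and A: "\<And>m. A m \<in> sets M" "\<And>m. A m \<subseteq> S" "decseq A"
    and null: "(\<Inter>m. A m) \<in> null_sets M"
  shows "(\<lambda>m. LINT x:A m|M. \<bar>g x\<bar>) \<longlonglongrightarrow> 0"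
proof -
  have "(\<lambda>m. LINT x|M. indicator (A m) x *\<^sub>R \<bar>g x\<bar>) \<longlonglongrightarrow> (LINT x|M. 0)"
  proof (rule integral_dominated_convergence[where w="\<lambda>x. indicator S x *\<^sub>R \<bar>g x\<bar>"])
    show "(\<lambda>x. indicator (A m) x *\<^sub>R \<bar>g x\<bar>) \<in> borel_measurable M" for m
      using set_integrable_abs[OF set_integrable_subset[OF g A(1,2)]]
      unfolding set_integrable_def by (rule borel_measurable_integrable)
    show "integrable M (\<lambda>x. indicator S x *\<^sub>R \<bar>g x\<bar>)"
      using set_integrable_abs[OF g] unfolding set_integrable_def .
    show "AE x in M. norm (indicator (A m) x *\<^sub>R \<bar>g x\<bar>) \<le> indicator S x *\<^sub>R \<bar>g x\<bar>" for m
      using A(2)[of m] by (intro AE_I2) (auto split: split_indicator)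
    show "AE x in M. (\<lambda>m. indicator (A m) x *\<^sub>R \<bar>g x\<bar>) \<longlonglongrightarrow> 0"
      using AE_not_in[OF null]
    proof eventually_elim
      case (elim x)
      then obtain m0 where "x \<notin> A m0" by blast
      then have "\<forall>m\<ge>m0. x \<notin> A m"
        using \<open>decseq A\<close> by (auto simp: decseq_def)
      then have "\<forall>\<^sub>F m in sequentially. indicator (A m) x *\<^sub>R \<bar>g x\<bar> = (0::real)"
        unfolding eventually_sequentially by (intro exI[of _ m0]) simp
      then show ?case by (rule tendsto_eventually)
    qed
  qed simp
  then show ?thesis by (simp add: set_lebesgue_integral_def)
qed

lemma loc_integrable_uminus:
  "loc_integrable \<mu> f \<Longrightarrow> loc_integrable \<mu> (\<lambda>x. - f x)"
  unfolding loc_integrable_def set_integrable_def by auto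

locale geom_doubling_measure =
  fixes N n \<beta> :: real and \<mu> :: "'a::metric_space measure"
  assumes geom_doubling: "geom_doubling N n TYPE('a)"
    and sets_\<mu>: "sets \<mu> = sets borel"
    and finite_on_bounded: "\<And>S. S \<in> sets borel \<Longrightarrow> bounded S \<Longrightarrow> emeasure \<mu> S < \<infinity>"
    and beta_gt: "\<beta> > 5 powr n"
begin

lemma space_eq [simp]: "space \<mu> = UNIV"
  using sets_\<mu> by (metis sets_eq_imp_space_eq space_borel)

lemma sets_open [simp]: "open S \<Longrightarrow> S \<in> sets \<mu>"
  using sets_\<mu> by simp

lemma emeasure_bounded_finite:
  assumes "S \<in> sets \<mu>" "bounded S"
  shows "emeasure \<mu> S \<noteq> top"
proof -
  have "S \<in> sets borel" using assms(1) sets_\<mu> by simp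
  then show ?thesis using finite_on_bounded assms(2) by fastforce
qed

lemma emeasure_eq_measure_bounded:
  "S \<in> sets \<mu> \<Longrightarrow> bounded S \<Longrightarrow> emeasure \<mu> S = ennreal (measure \<mu> S)"
  by (rule emeasure_eq_ennreal_measure) (rule emeasure_bounded_finite)

lemma measure_mono_bounded:
  "A \<subseteq> B \<Longrightarrow> A \<in> sets \<mu> \<Longrightarrow> B \<in> sets \<mu> \<Longrightarrow> bounded B \<Longrightarrow> measure \<mu> A \<le> measure \<mu> B"
  by (rule measure_mono_fmeasurable) (auto simp: fmeasurable_def less_top[symmetric] emeasure_bounded_finite)

lemma null_sets_measure_le_0:
  assumes "S \<in> sets \<mu>" "bounded S" "measure \<mu> S \<le> 0"
  shows "S \<in> null_sets \<mu>"
  using assms measure_nonneg[of \<mu> S] by (auto simp: emeasure_eq_measure_bounded)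

lemma null_sets_INT_measure_le:
  assumes V: "\<And>m. V m \<in> sets \<mu>" "\<And>m. bounded (V m)"
    and le: "\<And>m. measure \<mu> (V m) \<le> c m" and "c \<longlonglongrightarrow> 0"
  shows "(\<Inter>m. V m) \<in> null_sets \<mu>"
proof -
  have sets: "(\<Inter>m. V m) \<in> sets \<mu>"
    using V(1) by (intro sets.countable_INT) auto
  have "measure \<mu> (\<Inter>m. V m) \<le> measure \<mu> (V m)" for m
    using sets V by (intro measure_mono_bounded) auto
  then have "measure \<mu> (\<Inter>m. V m) \<le> c m" for m
    using le[of m] by (rule order_trans)
  then have "measure \<mu> (\<Inter>m. V m) \<le> 0"
    by (intro LIMSEQ_le_const[OF \<open>c \<longlonglongrightarrow> 0\<close>]) auto
  moreover have "bounded (\<Inter>m. V m)"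
    using V(2)[of 0] by (rule bounded_subset) auto
  ultimately show ?thesis
    using sets by (intro null_sets_measure_le_0)
qed

lemma beta_pos: "0 < \<beta>"
  using beta_gt powr_gt_zero[of 5 n] by linarith

lemma doubling_ball_iff:
  "doubling_ball \<mu> \<beta> c r \<longleftrightarrow> measure \<mu> (ball c (5 * r)) \<le> \<beta> * measure \<mu> (ball c r)"
  unfolding doubling_ball_def using beta_pos
  by (simp add: emeasure_eq_measure_bounded ennreal_mult[symmetric] ennreal_le_iff)

lemma measure_ball_decay:
  assumes "\<And>m. m < k \<Longrightarrow> \<not> doubling_ball \<mu> \<beta> x (r / 5 ^ Suc m)"
  shows "\<beta> ^ k * measure \<mu> (ball x (r / 5 ^ k)) \<le> measure \<mu> (ball x r)"
  using assms
proof (induction k)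
  case (Suc k)
  have "5 * (r / 5 ^ Suc k) = r / 5 ^ k" by simp
  then have "\<beta> * measure \<mu> (ball x (r / 5 ^ Suc k)) \<le> measure \<mu> (ball x (r / 5 ^ k))"
    using Suc.prems[of k] by (simp add: doubling_ball_iff)
  then have "\<beta> ^ Suc k * measure \<mu> (ball x (r / 5 ^ Suc k)) \<le> \<beta> ^ k * measure \<mu> (ball x (r / 5 ^ k))"
    using beta_pos by (simp add: mult.assoc mult_left_mono)
  with Suc show ?case by simp
qed simp

lemma non_doubling_points_cover:
  assumes "0 < R" and r: "0 < r" "r \<le> 1" and E: "E \<subseteq> ball x0 R"
    and non_doubling: "\<And>x m. x \<in> E \<Longrightarrow> \<not> doubling_ball \<mu> \<beta> x (r / 5 ^ Suc m)"
  obtains U where "U \<in> sets \<mu>" "bounded U" "E \<subseteq> U"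
    "measure \<mu> U \<le> \<bar>N\<bar> * (2 * (R + 1) / r) powr n * measure \<mu> (ball x0 (R + 1)) * (5 powr n / \<beta>) ^ k"
proof -
  define M where "M = measure \<mu> (ball x0 (R + 1))"
  have small_balls: "measure \<mu> (ball x (r / 5 ^ k)) \<le> M / \<beta> ^ k" if "x \<in> E" for x
  proof -
    have "ball x r \<subseteq> ball x0 (R + 1)"
      using E that r by (intro ball_subset_ball_dist) auto
    then have "measure \<mu> (ball x r) \<le> M"
      unfolding M_def by (intro measure_mono_bounded) auto
    then show ?thesis
      using measure_ball_decay[of k x r] non_doubling[OF that] beta_pos
      by (simp add: field_simps)
  qed
  have rk: "0 < r / 5 ^ k" "r / 5 ^ k \<le> 1"
    using r by (auto simp: divide_le_eq intro: order_trans[OF _ one_le_power])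
  obtain Y where Y: "finite Y" "Y \<subseteq> E" "real (card Y) \<le> \<bar>N\<bar> * (2 * (R + 1) / (r / 5 ^ k)) powr n"
    "E \<subseteq> (\<Union>y\<in>Y. ball y (r / 5 ^ k))"
    by (rule geom_doubling_net[OF geom_doubling rk \<open>0 < R\<close> E])
  define U where "U = (\<Union>y\<in>Y. ball y (r / 5 ^ k))"
  have "measure \<mu> U \<le> (\<Sum>y\<in>Y. measure \<mu> (ball y (r / 5 ^ k)))"
    unfolding U_def by (rule measure_UNION_le) (auto simp: Y(1))
  also have "\<dots> \<le> real (card Y) * (M / \<beta> ^ k)"
    using small_balls Y(2) by (intro sum_bounded_above) auto
  also have "\<dots> \<le> \<bar>N\<bar> * (2 * (R + 1) / (r / 5 ^ k)) powr n * (M / \<beta> ^ k)"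
    using Y(3) beta_pos by (intro mult_right_mono) (auto simp: M_def)
  also have "\<dots> = \<bar>N\<bar> * (2 * (R + 1) / r) powr n * M * (5 powr n / \<beta>) ^ k"
    using powr_divide_divide_power[of "2 * (R + 1)" r 5 k n] r \<open>0 < R\<close> beta_pos
    by (simp add: power_divide field_simps)
  moreover have "bounded U"
    using Y(2) E rk unfolding U_def
    by (intro bounded_subset[OF bounded_ball, of _ x0 "R + 1"] UN_least ball_subset_ball_dist) auto
  moreover have "U \<in> sets \<mu>"
    unfolding U_def by (intro sets_open open_UN) auto
  ultimately show ?thesis
    using Y(4) that by (simp add: U_def M_def)
qed

text \<open>Around each point of \<open>E\<close> the measure decays like \<open>\<beta>\<^sup>-\<^sup>k\<close> on the scale \<open>5\<^sup>-\<^sup>k\<close>, while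
  \<open>E\<close> is covered by \<open>O(5\<^sup>n\<^sup>k)\<close> balls of that scale; since \<open>\<beta> > 5\<^sup>n\<close> the covers have
  measures tending to \<open>0\<close>.\<close>
lemma non_doubling_points_null:
  assumes "0 < R" and r: "0 < r" "r \<le> 1" and E: "E \<subseteq> ball x0 R"
    and non_doubling: "\<And>x m. x \<in> E \<Longrightarrow> \<not> doubling_ball \<mu> \<beta> x (r / 5 ^ Suc m)"
  shows "\<exists>Z\<in>null_sets \<mu>. E \<subseteq> Z"
proof -
  define D where "D = \<bar>N\<bar> * (2 * (R + 1) / r) powr n * measure \<mu> (ball x0 (R + 1))"
  have "\<exists>U. U \<in> sets \<mu> \<and> bounded U \<and> E \<subseteq> U \<and> measure \<mu> U \<le> D * (5 powr n / \<beta>) ^ k" for k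
  proof -
    obtain U where "U \<in> sets \<mu>" "bounded U" "E \<subseteq> U" "measure \<mu> U \<le> D * (5 powr n / \<beta>) ^ k"
      unfolding D_def by (rule non_doubling_points_cover[OF assms])
    then show ?thesis by blast
  qed
  then obtain U where U: "\<And>k. U k \<in> sets \<mu>" "\<And>k. bounded (U k)" "\<And>k. E \<subseteq> U k"
    "\<And>k. measure \<mu> (U k) \<le> D * (5 powr n / \<beta>) ^ k"
    by metis
  have "(\<lambda>k. D * (5 powr n / \<beta>) ^ k) \<longlonglongrightarrow> 0"
    using beta_gt beta_pos by (intro tendsto_mult_right_zero LIMSEQ_power_zero) auto
  then have "(\<Inter>k. U k) \<in> null_sets \<mu>"
    by (rule null_sets_INT_measure_le[OF U(1) U(2) U(4)])
  moreover have "E \<subseteq> (\<Inter>k. U k)"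
    using U(3) by blast
  ultimately show ?thesis by blast
qed

lemma AE_small_doubling_balls:
  "AE x in \<mu>. \<forall>\<eta>>0. \<exists>c r. 0 < r \<and> r < \<eta> \<and> x \<in> ball c r \<and> doubling_ball \<mu> \<beta> c r"
proof -
  obtain x0 :: 'a where True by simp
  define E where "E R j = {x \<in> ball x0 (Suc R). \<forall>m. \<not> doubling_ball \<mu> \<beta> x (1 / 5 ^ j / 5 ^ Suc m)}"
    for R j :: nat
  have "AE x in \<mu>. x \<notin> E R j" for R j
  proof -
    have le1: "1 / 5 ^ j \<le> (1::real)"
      using power_le_one[of "1 / 5 :: real" j] by (simp add: power_one_over)
    have sub: "E R j \<subseteq> ball x0 (Suc R)"
      by (auto simp: E_def)
    have nd: "\<And>x m. x \<in> E R j \<Longrightarrow> \<not> doubling_ball \<mu> \<beta> x (1 / 5 ^ j / 5 ^ Suc m)"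
      by (auto simp: E_def)
    have "\<exists>Z\<in>null_sets \<mu>. E R j \<subseteq> Z"
      by (rule non_doubling_points_null[OF _ _ le1 sub nd]) simp_all
    then obtain Z where "Z \<in> null_sets \<mu>" "E R j \<subseteq> Z" by blast
    then show ?thesis by (intro AE_I'[of Z]) auto
  qed
  then have "AE x in \<mu>. \<forall>R j. x \<notin> E R j"
    by (simp add: AE_all_countable)
  then show ?thesis
  proof (rule AE_mp, intro AE_I2 impI allI)
    fix x and \<eta> :: real
    assume x: "\<forall>R j. x \<notin> E R j" and "0 < \<eta>"
    obtain j where j: "(1 / 5) ^ j < \<eta>"
      using real_arch_pow_inv[OF \<open>0 < \<eta>\<close>, of "1 / 5"] by auto
    obtain R :: nat where "dist x0 x < R"
      using reals_Archimedean2 by blast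
    then have "dist x0 x < Suc R" by simp
    with x obtain m where "doubling_ball \<mu> \<beta> x (1 / 5 ^ j / 5 ^ Suc m)"
      by (auto simp: E_def)
    moreover have "1 / 5 ^ j / 5 ^ Suc m \<le> 1 / (5::real) ^ j / 1"
      using one_le_power[of "5::real" "Suc m"] by (intro divide_left_mono) auto
    then have "1 / 5 ^ j / 5 ^ Suc m < \<eta>"
      using j by (simp add: power_one_over)
    ultimately show "\<exists>c r. 0 < r \<and> r < \<eta> \<and> x \<in> ball c r \<and> doubling_ball \<mu> \<beta> c r"
      by (intro exI[of _ x] exI[of _ "1 / 5 ^ j / 5 ^ Suc m"]) auto
  qed
qed

lemma set_integrable_bounded:
  "loc_integrable \<mu> g \<Longrightarrow> S \<in> sets \<mu> \<Longrightarrow> bounded S \<Longrightarrow> set_integrable \<mu> S g"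
  unfolding loc_integrable_def by blast

definition ball_average :: "('a \<Rightarrow> real) \<Rightarrow> 'a \<Rightarrow> real \<Rightarrow> real" where
  "ball_average g c r = (LINT y:ball c r|\<mu>. g y) / measure \<mu> (ball c r)"

lemma ball_average_uminus: "ball_average (\<lambda>x. - g x) c r = - ball_average g c r"
  by (simp add: ball_average_def set_lebesgue_integral_def)

text \<open>Balls of measure zero have average \<open>0\<close> (division by zero), but then also integral \<open>0\<close>.\<close>
lemma measure_mult_le_integral_of_ball_average:
  assumes "b < ball_average g c r"
  shows "b * measure \<mu> (ball c r) \<le> (LINT y:ball c r|\<mu>. g y)"
proof (cases "measure \<mu> (ball c r) = 0")
  case True
  then have "ball c r \<in> null_sets \<mu>"
    by (intro null_sets_measure_le_0) auto
  then have "AE y in \<mu>. y \<notin> ball c r" by (rule AE_not_in)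
  then have "AE y in \<mu>. indicator (ball c r) y *\<^sub>R g y = 0" by eventually_elim simp
  then have "(LINT y:ball c r|\<mu>. g y) = 0"
    unfolding set_lebesgue_integral_def by (rule integral_eq_zero_AE)
  with True show ?thesis by simp
next
  case False
  then have "0 < measure \<mu> (ball c r)"
    using measure_nonneg[of \<mu> "ball c r"] by linarith
  with assms show ?thesis
    by (simp add: ball_average_def pos_less_divide_eq less_imp_le)
qed

lemma open_superset_small_excess:
  assumes K: "K \<in> sets \<mu>" "K \<subseteq> ball x0 R" and "0 < \<delta>"
  obtains G where "open G" "K \<subseteq> G" "G \<subseteq> ball x0 R" "measure \<mu> (G - K) < \<delta>"
proof -
  define \<nu> where "\<nu> = density \<mu> (indicator (ball x0 R))"
  have measure_\<nu>: "measure \<nu> X = measure \<mu> (ball x0 R \<inter> X)" if "X \<in> sets \<mu>" for X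
    unfolding \<nu>_def measure_def by (subst emeasure_restricted) (auto simp: that)
  have "sets \<nu> = sets borel" by (simp add: \<nu>_def sets_\<mu>)
  moreover have "emeasure \<nu> (space \<nu>) \<noteq> \<infinity>"
    unfolding \<nu>_def using emeasure_bounded_finite[of "ball x0 R"]
    by (subst emeasure_restricted) auto
  moreover have "K \<in> sets borel" using K by (simp add: sets_\<mu>)
  ultimately have "\<exists>U. open U \<and> K \<subseteq> U \<and> measure \<nu> (U - K) < \<delta>"
    by (rule finite_measure_outer_regular[OF _ _ _ \<open>0 < \<delta>\<close>])
  then obtain U where U: "open U" "K \<subseteq> U" "measure \<nu> (U - K) < \<delta>"
    by blast
  have "ball x0 R \<inter> (U - K) = U \<inter> ball x0 R - K" by blast
  moreover have "U - K \<in> sets \<mu>" using U K by auto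
  ultimately have "measure \<mu> (U \<inter> ball x0 R - K) < \<delta>"
    using U(3) measure_\<nu>[of "U - K"] by simp
  with U K show ?thesis
    by (intro that[of "U \<inter> ball x0 R"]) auto
qed

lemma decseq_open_approx:
  assumes K: "K \<in> sets \<mu>" "K \<subseteq> ball x0 R"
  obtains H where "\<And>m. open (H m)" "\<And>m. K \<subseteq> H m" "\<And>m. H m \<subseteq> ball x0 R" "decseq H"
    "(\<lambda>m. measure \<mu> (H m - K)) \<longlonglongrightarrow> 0"
proof -
  have "\<exists>G. open G \<and> K \<subseteq> G \<and> G \<subseteq> ball x0 R \<and> measure \<mu> (G - K) < 1 / Suc m" for m
  proof -
    obtain G where "open G" "K \<subseteq> G" "G \<subseteq> ball x0 R" "measure \<mu> (G - K) < 1 / Suc m"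
      by (rule open_superset_small_excess[OF K, of "1 / Suc m"]) auto
    then show ?thesis by blast
  qed
  then obtain G where G: "\<And>m. open (G m)" "\<And>m. K \<subseteq> G m" "\<And>m. G m \<subseteq> ball x0 R"
    "\<And>m. measure \<mu> (G m - K) < 1 / Suc m"
    by metis
  define H where "H m = (\<Inter>i\<le>m. G i)" for m
  have H: "open (H m)" "K \<subseteq> H m" "H m \<subseteq> G m" for m
    using G by (auto simp: H_def)
  have "measure \<mu> (H m - K) \<le> measure \<mu> (G m - K)" for m
  proof (rule measure_mono_bounded)
    show "H m - K \<subseteq> G m - K" using H(3) by blast
    show "H m - K \<in> sets \<mu>" "G m - K \<in> sets \<mu>" using H(1) G(1) K(1) by auto
    show "bounded (G m - K)"
      by (rule bounded_subset[OF bounded_ball]) (use G(3) in blast)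
  qed
  then have "measure \<mu> (H m - K) \<le> 1 / Suc m" for m
    using G(4)[of m] by (smt (verit))
  then have lim: "(\<lambda>m. measure \<mu> (H m - K)) \<longlonglongrightarrow> 0"
    by (intro tendsto_sandwich[OF _ _ tendsto_const LIMSEQ_Suc[OF lim_const_over_n[of 1]]])
      (auto intro!: always_eventually)
  have dec: "decseq H"
    by (auto simp: decseq_def H_def)
  have sub: "H m \<subseteq> ball x0 R" for m
    using H(3) G(3) by blast
  show ?thesis
    by (rule that[OF H(1) H(2) sub dec lim])
qed

lemma measure_le_of_integral_ge:
  assumes g: "loc_integrable \<mu> g" and "a < b"
    and U: "U \<in> sets \<mu>" "U \<subseteq> G" and G: "G \<in> sets \<mu>" "bounded G"
    and K: "K \<in> sets \<mu>" "\<And>x. x \<in> K \<Longrightarrow> g x < a"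
    and ge: "b * measure \<mu> U \<le> (LINT x:U|\<mu>. g x)"
  shows "measure \<mu> U \<le> (\<bar>a\<bar> * measure \<mu> (G - K) + (LINT x:G - K|\<mu>. \<bar>g x\<bar>)) / (b - a)"
proof -
  have bounded: "bounded U" "bounded (U \<inter> K)" "bounded (U - K)" "bounded (G - K)"
    using U G by (auto intro: bounded_subset)
  have sets: "U \<inter> K \<in> sets \<mu>" "U - K \<in> sets \<mu>" "G - K \<in> sets \<mu>"
    using U G K by auto
  have "(LINT x:U|\<mu>. g x) = (LINT x:(U \<inter> K) \<union> (U - K)|\<mu>. g x)"
    by (simp add: Int_Diff_Un)
  also have "\<dots> = (LINT x:U \<inter> K|\<mu>. g x) + (LINT x:U - K|\<mu>. g x)"
    using sets bounded by (intro set_integral_Un set_integrable_bounded[OF g]) auto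
  also have "(LINT x:U \<inter> K|\<mu>. g x) \<le> (LINT x:U \<inter> K|\<mu>. a)"
    using sets(1) bounded(2) K(2) emeasure_bounded_finite[of "U \<inter> K"]
    by (intro set_integral_mono set_integrable_bounded[OF g])
      (auto simp: set_integrable_def less_top intro: less_imp_le)
  also have "\<dots> = a * measure \<mu> (U \<inter> K)"
    using sets(1) bounded(2) emeasure_bounded_finite[of "U \<inter> K"] by (simp add: set_integral_const)
  also have "(LINT x:U - K|\<mu>. g x) \<le> (LINT x:U - K|\<mu>. \<bar>g x\<bar>)"
    using set_integrable_bounded[OF g sets(2) bounded(3)]
    by (intro set_integral_mono set_integrable_abs) auto
  also have "\<dots> \<le> (LINT x:G - K|\<mu>. \<bar>g x\<bar>)"
    using sets bounded U(2) by (intro set_integral_abs_mono_set set_integrable_bounded[OF g]) auto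
  finally have "b * measure \<mu> U \<le> a * measure \<mu> (U \<inter> K) + (LINT x:G - K|\<mu>. \<bar>g x\<bar>)"
    using ge by linarith
  moreover have "measure \<mu> (U \<inter> K) = measure \<mu> U - measure \<mu> (U - K)"
    using measure_Diff[of \<mu> U "U - K"] sets bounded U emeasure_bounded_finite[of U]
    by (simp add: Diff_Diff_Int Int_commute)
  moreover have "- a * measure \<mu> (U - K) \<le> \<bar>a\<bar> * measure \<mu> (G - K)"
    using measure_mono_bounded[of "U - K" "G - K"] sets bounded U(2)
    by (intro order_trans[OF mult_right_mono[of "- a" "\<bar>a\<bar>"] mult_left_mono]) auto
  ultimately have "(b - a) * measure \<mu> U \<le> \<bar>a\<bar> * measure \<mu> (G - K) + (LINT x:G - K|\<mu>. \<bar>g x\<bar>)"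
    by (simp add: algebra_simps)
  with \<open>a < b\<close> show ?thesis
    by (simp add: field_simps)
qed

lemma measure_mult_le_integral_Union:
  assumes g: "loc_integrable \<mu> g" and T: "finite T" "disjoint_family_on (\<lambda>p. ball (fst p) (snd p)) T"
    and bounded: "bounded (\<Union>p\<in>T. ball (fst p) (snd p))"
    and avg: "\<And>p. p \<in> T \<Longrightarrow> b < ball_average g (fst p) (snd p)"
  shows "b * measure \<mu> (\<Union>p\<in>T. ball (fst p) (snd p)) \<le> (LINT x:(\<Union>p\<in>T. ball (fst p) (snd p))|\<mu>. g x)"
proof -
  have "b * measure \<mu> (\<Union>p\<in>T. ball (fst p) (snd p)) = (\<Sum>p\<in>T. b * measure \<mu> (ball (fst p) (snd p)))"
    using T emeasure_bounded_finite by (simp add: measure_finite_Union sum_distrib_left image_subset_iff)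
  also have "\<dots> \<le> (\<Sum>p\<in>T. LINT x:ball (fst p) (snd p)|\<mu>. g x)"
    using avg by (intro sum_mono measure_mult_le_integral_of_ball_average)
  also have "\<dots> = (LINT x:(\<Union>p\<in>T. ball (fst p) (snd p))|\<mu>. g x)"
  proof (rule set_integral_finite_UN_AE[symmetric])
    show "AE x in \<mu>. x \<in> ball (fst p) (snd p) \<and> x \<in> ball (fst q) (snd q) \<longrightarrow> p = q"
      if "p \<in> T" "q \<in> T" for p q
      using T(2) that unfolding disjoint_family_on_def by (intro AE_I2) blast
    show "set_integrable \<mu> (ball (fst p) (snd p)) g" for p
      using g by (rule set_integrable_bounded) auto
  qed (use T in auto)
  finally show ?thesis .
qed

lemma measure_enlarged_balls_le:
  assumes g: "loc_integrable \<mu> g" and "a < b"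
    and T: "finite T" "disjoint_family_on (\<lambda>p. ball (fst p) (snd p)) T"
    and balls: "\<And>p. p \<in> T \<Longrightarrow> ball (fst p) (snd p) \<subseteq> G \<and> doubling_ball \<mu> \<beta> (fst p) (snd p) \<and>
      b < ball_average g (fst p) (snd p)"
    and G: "G \<in> sets \<mu>" "bounded G" and K: "K \<in> sets \<mu>" "\<And>x. x \<in> K \<Longrightarrow> g x < a"
  shows "measure \<mu> (\<Union>p\<in>T. ball (fst p) (5 * snd p))
    \<le> \<beta> * (\<bar>a\<bar> * measure \<mu> (G - K) + (LINT x:G - K|\<mu>. \<bar>g x\<bar>)) / (b - a)"
proof -
  define U where "U = (\<Union>p\<in>T. ball (fst p) (snd p))"
  have "U \<subseteq> G"
    using balls unfolding U_def by fastforce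
  moreover have "U \<in> sets \<mu>"
    unfolding U_def by (intro sets_open open_UN) auto
  ultimately have U: "U \<in> sets \<mu>" "U \<subseteq> G" "bounded U"
    using bounded_subset[OF G(2)] by auto
  have "measure \<mu> (\<Union>p\<in>T. ball (fst p) (5 * snd p)) \<le> (\<Sum>p\<in>T. measure \<mu> (ball (fst p) (5 * snd p)))"
    using T(1) by (intro measure_UNION_le) auto
  also have "\<dots> \<le> (\<Sum>p\<in>T. \<beta> * measure \<mu> (ball (fst p) (snd p)))"
    using balls by (intro sum_mono) (auto simp: doubling_ball_iff)
  also have "\<dots> = \<beta> * measure \<mu> U"
    using T emeasure_bounded_finite
    by (simp add: U_def measure_finite_Union sum_distrib_left image_subset_iff)
  also have "\<dots> \<le> \<beta> * ((\<bar>a\<bar> * measure \<mu> (G - K) + (LINT x:G - K|\<mu>. \<bar>g x\<bar>)) / (b - a))"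
    using measure_mult_le_integral_Union[OF g T] balls U beta_pos
    by (intro mult_left_mono measure_le_of_integral_ge[OF g \<open>a < b\<close> U(1,2) G K]) (auto simp: U_def)
  finally show ?thesis by simp
qed

definition large_averages :: "('a \<Rightarrow> real) \<Rightarrow> real \<Rightarrow> 'a set" where
  "large_averages g b = {x. \<forall>\<eta>>0. \<exists>c r. 0 < r \<and> r < \<eta> \<and> x \<in> ball c r \<and> doubling_ball \<mu> \<beta> c r \<and>
     b < ball_average g c r}"

lemma measure_UN_incseq_le:
  assumes "\<And>k. W k \<in> sets \<mu>" "bounded (\<Union>k. W k)" "incseq W" "\<And>k. measure \<mu> (W k) \<le> B"
  shows "measure \<mu> (\<Union>k. W k) \<le> B"
proof -
  have "(\<lambda>k. measure \<mu> (W k)) \<longlonglongrightarrow> measure \<mu> (\<Union>k. W k)"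
    using assms(1-3) emeasure_bounded_finite[of "\<Union>k. W k"] by (intro Lim_measure_incseq) auto
  then show ?thesis
    using assms(4) by (intro LIMSEQ_le_const2) auto
qed

lemma large_averages_small_ball:
  assumes "open G" "x \<in> G" "x \<in> large_averages g b"
  obtains c r where "0 < r" "r \<le> 1" "x \<in> ball c r" "ball c r \<subseteq> G" "doubling_ball \<mu> \<beta> c r"
    "b < ball_average g c r"
proof -
  obtain s where s: "0 < s" "ball x s \<subseteq> G"
    using assms(1,2) openE by blast
  have "\<exists>c r. 0 < r \<and> r < min (s / 2) 1 \<and> x \<in> ball c r \<and> doubling_ball \<mu> \<beta> c r \<and>
      b < ball_average g c r"
    using assms(3) s(1) unfolding large_averages_def by (simp del: min_less_iff_conj)
  then obtain c r where cr: "0 < r" "r < min (s / 2) 1" "x \<in> ball c r" "doubling_ball \<mu> \<beta> c r"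
    "b < ball_average g c r"
    by blast
  have "ball c r \<subseteq> ball x (r + r)"
    using cr(3) by (intro ball_subset_ball_dist) (auto simp: dist_commute)
  also have "\<dots> \<subseteq> G" using cr(2) s(2) by auto
  finally show ?thesis
    using cr that by simp
qed

lemma large_averages_cover:
  assumes g: "loc_integrable \<mu> g" and "a < b" and "0 < R"
    and G: "open G" "K \<subseteq> G" "G \<subseteq> ball x0 R" and K: "K \<in> sets \<mu>" "\<And>x. x \<in> K \<Longrightarrow> g x < a"
  obtains V where "V \<in> sets \<mu>" "bounded V" "K \<inter> large_averages g b \<subseteq> V"
    "measure \<mu> V \<le> \<beta> * (\<bar>a\<bar> * measure \<mu> (G - K) + (LINT x:G - K|\<mu>. \<bar>g x\<bar>)) / (b - a)"
proof -
  define bound where "bound = \<beta> * (\<bar>a\<bar> * measure \<mu> (G - K) + (LINT x:G - K|\<mu>. \<bar>g x\<bar>)) / (b - a)"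
  define F where "F = {p. 0 < snd p \<and> snd p \<le> 1 \<and> ball (fst p) (snd p) \<subseteq> G \<and>
    doubling_ball \<mu> \<beta> (fst p) (snd p) \<and> b < ball_average g (fst p) (snd p)}"
  have F_centre: "0 < snd p \<and> snd p \<le> 1 \<and> fst p \<in> ball x0 R" if "p \<in> F" for p
  proof -
    have "0 < snd p" "snd p \<le> 1" "ball (fst p) (snd p) \<subseteq> G" using that by (auto simp: F_def)
    moreover have "fst p \<in> ball (fst p) (snd p)" using \<open>0 < snd p\<close> by simp
    ultimately show ?thesis using G(3) by blast
  qed
  obtain T where T: "\<And>k. finite (T k)" "\<And>k. T k \<subseteq> F"
    "\<And>k. disjoint_family_on (\<lambda>p. ball (fst p) (snd p)) (T k)" "incseq T"
    and covers: "\<And>p. p \<in> F \<Longrightarrow> \<exists>k. \<exists>q\<in>T k. ball (fst p) (snd p) \<subseteq> ball (fst q) (5 * snd q)"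
    using vitali_covering_doubling[of N n R F x0, OF geom_doubling \<open>0 < R\<close> F_centre] by blast
  define W where "W k = (\<Union>q\<in>T k. ball (fst q) (5 * snd q))" for k
  have W_sets: "W k \<in> sets \<mu>" for k
    unfolding W_def by (intro sets_open open_UN) auto
  have "W k \<subseteq> ball x0 (R + 5)" for k
  proof -
    have "ball (fst q) (5 * snd q) \<subseteq> ball x0 (R + 5)" if "q \<in> F" for q
      using F_centre[OF that] by (intro ball_subset_ball_dist) auto
    then show ?thesis using T(2) by (auto simp: W_def)
  qed
  then have bounded: "bounded (\<Union>k. W k)"
    by (intro bounded_subset[OF bounded_ball]) blast
  have "measure \<mu> (W k) \<le> bound" for k
    unfolding W_def bound_def
    using T(1,3) T(2)[of k] G K
    by (intro measure_enlarged_balls_le[OF g \<open>a < b\<close>]) (auto simp: F_def intro: bounded_subset)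
  moreover have "incseq W"
  proof (rule incseq_SucI)
    show "W k \<subseteq> W (Suc k)" for k
      unfolding W_def by (rule UN_mono[OF incseqD[OF T(4)]]) auto
  qed
  ultimately have "measure \<mu> (\<Union>k. W k) \<le> bound"
    using W_sets bounded by (intro measure_UN_incseq_le)
  moreover have "x \<in> (\<Union>k. W k)" if x: "x \<in> K" "x \<in> large_averages g b" for x
  proof -
    have "x \<in> G" using G(2) x(1) by blast
    then obtain c r where "0 < r" "r \<le> 1" "x \<in> ball c r" "ball c r \<subseteq> G" "doubling_ball \<mu> \<beta> c r"
      "b < ball_average g c r"
      by (rule large_averages_small_ball[OF G(1) _ x(2)])
    moreover from this have "(c, r) \<in> F" by (simp add: F_def)
    moreover from covers[OF this(1)] obtain k q where "q \<in> T k" "ball c r \<subseteq> ball (fst q) (5 * snd q)"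
      by auto
    ultimately show ?thesis unfolding W_def by blast
  qed
  ultimately show ?thesis
    using W_sets bounded by (intro that[of "\<Union>k. W k"]) (auto simp: bound_def)
qed

text \<open>Apply the covering bound to a decreasing sequence of open sets \<open>H\<^sub>m \<supseteq> K\<close> with
  \<open>\<mu>(H\<^sub>m - K) \<rightarrow> 0\<close>; the bounds then tend to \<open>0\<close>.\<close>
lemma large_averages_null:
  assumes g: "loc_integrable \<mu> g" and "a < b" and "0 < R"
  shows "\<exists>Z\<in>null_sets \<mu>. {x \<in> ball x0 R. g x < a} \<inter> large_averages g b \<subseteq> Z"
proof -
  define K where "K = {x \<in> ball x0 R. g x < a}"
  have "{x \<in> space \<mu>. g x < a} \<in> sets \<mu>"
    using g unfolding loc_integrable_def borel_measurable_iff_less by blast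
  moreover have "K = ball x0 R \<inter> {x \<in> space \<mu>. g x < a}"
    by (auto simp: K_def)
  ultimately have K: "K \<in> sets \<mu>" "K \<subseteq> ball x0 R"
    by (auto simp: K_def)
  obtain H where H: "\<And>m. open (H m)" "\<And>m. K \<subseteq> H m" "\<And>m. H m \<subseteq> ball x0 R" "decseq H"
    and lim_measure: "(\<lambda>m. measure \<mu> (H m - K)) \<longlonglongrightarrow> 0"
    using decseq_open_approx[OF K] by blast
  have H_K: "H m - K \<in> sets \<mu>" "H m - K \<subseteq> ball x0 R" "bounded (H m - K)" for m
    using H(1,3) K(1) by (auto intro: bounded_subset[OF bounded_ball])
  then have "(\<Inter>m. H m - K) \<in> null_sets \<mu>"
    by (intro null_sets_INT_measure_le[OF _ _ order_refl lim_measure])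
  moreover have "set_integrable \<mu> (ball x0 R) g"
    by (rule set_integrable_bounded[OF g]) auto
  moreover have "decseq (\<lambda>m. H m - K)"
    using H(4) unfolding decseq_def by blast
  ultimately have lim_integral: "(\<lambda>m. LINT x:H m - K|\<mu>. \<bar>g x\<bar>) \<longlonglongrightarrow> 0"
    using H_K by (intro set_integral_abs_decseq_tendsto_0)
  define c where "c m = \<beta> * (\<bar>a\<bar> * measure \<mu> (H m - K) + (LINT x:H m - K|\<mu>. \<bar>g x\<bar>)) / (b - a)" for m
  have "c \<longlonglongrightarrow> \<beta> * (\<bar>a\<bar> * 0 + 0) / (b - a)"
    unfolding c_def by (intro tendsto_intros lim_measure lim_integral) (use \<open>a < b\<close> in auto)
  then have lim_c: "c \<longlonglongrightarrow> 0" by simp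
  have "\<exists>V. V \<in> sets \<mu> \<and> bounded V \<and> K \<inter> large_averages g b \<subseteq> V \<and> measure \<mu> V \<le> c m" for m
    using large_averages_cover[OF g \<open>a < b\<close> \<open>0 < R\<close> H(1,2,3) K(1)] unfolding c_def K_def by blast
  then obtain V where V: "\<And>m. V m \<in> sets \<mu>" "\<And>m. bounded (V m)"
    "\<And>m. K \<inter> large_averages g b \<subseteq> V m" "\<And>m. measure \<mu> (V m) \<le> c m"
    by metis
  have "(\<Inter>m. V m) \<in> null_sets \<mu>"
    by (rule null_sets_INT_measure_le[OF V(1) V(2) V(4) lim_c])
  moreover have "K \<inter> large_averages g b \<subseteq> (\<Inter>m. V m)"
    using V(3) by blast
  ultimately show ?thesis
    unfolding K_def by blast
qed

lemma not_in_large_averagesD: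
  assumes "x \<notin> large_averages g b"
  obtains \<eta> where "0 < \<eta>"
    "\<forall>c r. 0 < r \<and> r < \<eta> \<and> x \<in> ball c r \<and> doubling_ball \<mu> \<beta> c r \<longrightarrow> ball_average g c r \<le> b"
proof -
  have "\<exists>\<eta>>0. \<forall>c r. 0 < r \<and> r < \<eta> \<and> x \<in> ball c r \<and> doubling_ball \<mu> \<beta> c r \<longrightarrow>
      ball_average g c r \<le> b"
    using assms unfolding large_averages_def by (force simp: not_less)
  then show ?thesis using that by blast
qed

lemma AE_not_in_large_averages:
  assumes g: "loc_integrable \<mu> g"
  shows "AE x in \<mu>. \<forall>(R::nat) (a::rat) (b::rat). (of_rat a :: real) < of_rat b \<longrightarrow>
    x \<notin> {x \<in> ball x0 (Suc R). g x < of_rat a} \<inter> large_averages g (of_rat b)"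
proof -
  have "AE x in \<mu>. (of_rat a :: real) < of_rat b \<longrightarrow>
      x \<notin> {x \<in> ball x0 (Suc R). g x < of_rat a} \<inter> large_averages g (of_rat b)"
    for R :: nat and a b :: rat
  proof (cases "of_rat a < (of_rat b :: real)")
    case True
    then obtain Z where "Z \<in> null_sets \<mu>"
      "{x \<in> ball x0 (Suc R). g x < of_rat a} \<inter> large_averages g (of_rat b) \<subseteq> Z"
      using large_averages_null[OF g, of "of_rat a" "of_rat b" "Suc R" x0] by auto
    then show ?thesis by (intro AE_I'[of Z]) auto
  qed simp
  then show ?thesis
    by (simp add: AE_all_countable del: of_rat_less)
qed

lemma AE_limsup_ball_average_le:
  assumes g: "loc_integrable \<mu> g"
  shows "AE x in \<mu>. \<forall>\<epsilon>>0. \<exists>\<eta>>0. \<forall>c r. 0 < r \<and> r < \<eta> \<and> x \<in> ball c r \<and> doubling_ball \<mu> \<beta> c r \<longrightarrow>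
    ball_average g c r < g x + \<epsilon>"
proof -
  obtain x0 :: 'a where True by simp
  show ?thesis
  proof (rule AE_mp[OF AE_not_in_large_averages[OF g, of x0]], intro AE_I2 impI allI)
    fix x and \<epsilon> :: real
    assume x: "\<forall>(R::nat) (a::rat) (b::rat). (of_rat a :: real) < of_rat b \<longrightarrow>
      x \<notin> {x \<in> ball x0 (Suc R). g x < of_rat a} \<inter> large_averages g (of_rat b)"
      and "0 < \<epsilon>"
    obtain a where a: "g x < of_rat a" "of_rat a < g x + \<epsilon> / 2"
      using of_rat_dense[of "g x" "g x + \<epsilon> / 2"] \<open>0 < \<epsilon>\<close> by auto
    obtain b where b: "g x + \<epsilon> / 2 < of_rat b" "of_rat b < g x + \<epsilon>"
      using of_rat_dense[of "g x + \<epsilon> / 2" "g x + \<epsilon>"] \<open>0 < \<epsilon>\<close> by auto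
    obtain R :: nat where "dist x0 x < R"
      using reals_Archimedean2 by blast
    then have "x \<in> ball x0 (Suc R)" by simp
    moreover have "(of_rat a :: real) < of_rat b"
      using a b by linarith
    ultimately have "x \<notin> large_averages g (of_rat b)"
      using x a(1) by blast
    then obtain \<eta> where "0 < \<eta>" and \<eta>: "\<forall>c r. 0 < r \<and> r < \<eta> \<and> x \<in> ball c r \<and>
        doubling_ball \<mu> \<beta> c r \<longrightarrow> ball_average g c r \<le> of_rat b"
      by (rule not_in_large_averagesD)
    show "\<exists>\<eta>>0. \<forall>c r. 0 < r \<and> r < \<eta> \<and> x \<in> ball c r \<and> doubling_ball \<mu> \<beta> c r \<longrightarrow>
        ball_average g c r < g x + \<epsilon>"
      using \<eta> b(2) \<open>0 < \<eta>\<close> by (meson order.strict_trans1)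
  qed
qed

theorem AE_doubling_ball_average_tendsto:
  assumes f: "loc_integrable \<mu> f"
  shows "AE x in \<mu>.
    (\<forall>\<eta>>0. \<exists>c r. 0 < r \<and> r < \<eta> \<and> x \<in> ball c r \<and> doubling_ball \<mu> \<beta> c r) \<and>
    (\<forall>\<epsilon>>0. \<exists>\<eta>>0. \<forall>c r. 0 < r \<and> r < \<eta> \<and> x \<in> ball c r \<and> doubling_ball \<mu> \<beta> c r \<longrightarrow>
       \<bar>ball_average f c r - f x\<bar> < \<epsilon>)"
  using AE_small_doubling_balls AE_limsup_ball_average_le[OF f]
    AE_limsup_ball_average_le[OF loc_integrable_uminus[OF f]]
proof eventually_elim
  case (elim x)
  have "\<exists>\<eta>>0. \<forall>c r. 0 < r \<and> r < \<eta> \<and> x \<in> ball c r \<and> doubling_ball \<mu> \<beta> c r \<longrightarrow>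
      \<bar>ball_average f c r - f x\<bar> < \<epsilon>" if "0 < \<epsilon>" for \<epsilon>
  proof -
    obtain \<eta>1 where "0 < \<eta>1" and upper: "\<forall>c r. 0 < r \<and> r < \<eta>1 \<and> x \<in> ball c r \<and>
        doubling_ball \<mu> \<beta> c r \<longrightarrow> ball_average f c r < f x + \<epsilon>"
      using elim(2) \<open>0 < \<epsilon>\<close> by blast
    obtain \<eta>2 where "0 < \<eta>2" and lower: "\<forall>c r. 0 < r \<and> r < \<eta>2 \<and> x \<in> ball c r \<and>
        doubling_ball \<mu> \<beta> c r \<longrightarrow> ball_average (\<lambda>x. - f x) c r < - f x + \<epsilon>"
      using elim(3) \<open>0 < \<epsilon>\<close> by blast
    show ?thesis
    proof (intro exI[of _ "min \<eta>1 \<eta>2"] conjI allI impI)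
      fix c r assume cr: "0 < r \<and> r < min \<eta>1 \<eta>2 \<and> x \<in> ball c r \<and> doubling_ball \<mu> \<beta> c r"
      then have "ball_average f c r < f x + \<epsilon>" "ball_average (\<lambda>x. - f x) c r < - f x + \<epsilon>"
        using upper lower by simp_all
      then show "\<bar>ball_average f c r - f x\<bar> < \<epsilon>"
        by (simp add: ball_average_uminus abs_less_iff)
    qed (use \<open>0 < \<eta>1\<close> \<open>0 < \<eta>2\<close> in simp)
  qed
  with elim(1) show ?case by blast
qed

end

theorem corollary3p6:
  fixes N n \<beta> :: real and \<mu> :: "'a::metric_space measure" and f :: "'a \<Rightarrow> real"
  assumes "geom_doubling N n TYPE('a)"
    and "sets \<mu> = sets borel"
    and "\<And>S. S \<in> sets borel \<Longrightarrow> bounded S \<Longrightarrow> emeasure \<mu> S < \<infinity>"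
    and "\<beta> > 5 powr n"
    and "loc_integrable \<mu> f"
  shows "AE x in \<mu>.
           (\<forall>\<eta>>0. \<exists>c r. 0 < r \<and> r < \<eta> \<and> x \<in> ball c r \<and> doubling_ball \<mu> \<beta> c r) \<and>
           (\<forall>\<epsilon>>0. \<exists>\<eta>>0. \<forall>c r. 0 < r \<and> r < \<eta> \<and> x \<in> ball c r \<and> doubling_ball \<mu> \<beta> c r \<longrightarrow>
              \<bar>(LINT y:ball c r|\<mu>. f y) / measure \<mu> (ball c r) - f x\<bar> < \<epsilon>)"
proof -
  interpret geom_doubling_measure N n \<beta> \<mu>
    using assms(1-4) by unfold_locales
  show ?thesis
    using AE_doubling_ball_average_tendsto[OF assms(5)] by (simp add: ball_average_def)
qed

end
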